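(* Suppose Assumptions 1–4 hold. Then the social welfare $W(\mathbf{x})$ achieved at any Cournot candidate $\mathbf{x}$ is positive, and the optimal social welfare $\sup_{\mathbf{y}\ge 0}W(\mathbf{y})$ is positive.
   Context: Cournot model: $N$ suppliers, inverse demand $p:[0,\infty)\to[0,\infty)$, supplier $n$ has cost $C_n:[0,\infty)\to[0,\infty)$ and chooses $x_n\ge0$; $X=\sum_n x_n$. $\partial_\pm$ denote right/left derivatives; $C_n'(0)$ is the right derivative at $0$. Assumption 1: each $C_n$ is convex, continuous, nondecreasing on $[0,\infty)$, continuously differentiable on $(0,\infty)$, with $C_n(0)=0$. Assumption 2: $p$ is continuous, nonnegative, nonincreasing, $p(0)>0$; its right derivative at $0$ exists and at every $q>0$ its left and right derivatives exist. Assumption 3: there exists $R>0$ such that $p(R)\le\min_n C_n'(0)$. Assumption 4: $p(0)>\min_n C_n'(0)$. Social welfare of $\mathbf{x}\ge0$: $W(\mathbf{x})=\int_0^X p(q)\,dq-\sum_{n=1}^N C_n(x_n)$. A nonnegative vector $\mathbf{x}$ is a Cournot candidate if for every $n$: $C_n'(x_n)\le p(X)+x_n\,\partial_-p(X)$ whenever $x_n>0$, and $C_n'(x_n)\ge p(X)+x_n\,\partial_+p(X)$. *)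

theory Defs
  imports "HOL-Analysis.Analysis"
begin

definition has_right_deriv :: "(real \<Rightarrow> real) \<Rightarrow> real \<Rightarrow> bool" where
  "has_right_deriv f x \<longleftrightarrow> (\<exists>L. ((\<lambda>y. (f y - f x) / (y - x)) \<longlongrightarrow> L) (at_right x))"

definition has_left_deriv :: "(real \<Rightarrow> real) \<Rightarrow> real \<Rightarrow> bool" where
  "has_left_deriv f x \<longleftrightarrow> (\<exists>L. ((\<lambda>y. (f y - f x) / (y - x)) \<longlongrightarrow> L) (at_left x))"

definition right_deriv :: "(real \<Rightarrow> real) \<Rightarrow> real \<Rightarrow> real" where
  "right_deriv f x = Lim (at_right x) (\<lambda>y. (f y - f x) / (y - x))"

definition left_deriv :: "(real \<Rightarrow> real) \<Rightarrow> real \<Rightarrow> real" where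
  "left_deriv f x = Lim (at_left x) (\<lambda>y. (f y - f x) / (y - x))"

definition marg :: "(real \<Rightarrow> real) \<Rightarrow> real \<Rightarrow> real" where
  "marg f x = (if x = 0 then right_deriv f 0 else deriv f x)"

text \<open>Suppliers are indexed by n < N; a supply vector is x :: nat => real (entries n < N).\<close>

definition total :: "nat \<Rightarrow> (nat \<Rightarrow> real) \<Rightarrow> real" where
  "total N x = (\<Sum>n<N. x n)"

definition welfare :: "nat \<Rightarrow> (real \<Rightarrow> real) \<Rightarrow> (nat \<Rightarrow> real \<Rightarrow> real) \<Rightarrow> (nat \<Rightarrow> real) \<Rightarrow> real" where
  "welfare N p C x = integral {0..total N x} p - (\<Sum>n<N. C n (x n))"

definition cournot_candidate ::
  "nat \<Rightarrow> (real \<Rightarrow> real) \<Rightarrow> (nat \<Rightarrow> real \<Rightarrow> real) \<Rightarrow> (nat \<Rightarrow> real) \<Rightarrow> bool" where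
  "cournot_candidate N p C x \<longleftrightarrow>
     (\<forall>n<N. 0 \<le> x n) \<and>
     (\<forall>n<N. 0 < x n \<longrightarrow>
        marg (C n) (x n) \<le> p (total N x) + x n * left_deriv p (total N x)) \<and>
     (\<forall>n<N. marg (C n) (x n) \<ge> p (total N x) + x n * right_deriv p (total N x))"

definition assumption1 :: "nat \<Rightarrow> (nat \<Rightarrow> real \<Rightarrow> real) \<Rightarrow> bool" where
  "assumption1 N C \<longleftrightarrow> (\<forall>n<N.
     (\<forall>x\<ge>0. 0 \<le> C n x) \<and>
     convex_on {0..} (C n) \<and> continuous_on {0..} (C n) \<and> mono_on {0..} (C n) \<and>
     (\<forall>x>0. C n differentiable (at x)) \<and> continuous_on {0<..} (deriv (C n)) \<and>
     C n 0 = 0)"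

definition assumption2 :: "(real \<Rightarrow> real) \<Rightarrow> bool" where
  "assumption2 p \<longleftrightarrow>
     continuous_on {0..} p \<and> (\<forall>q\<ge>0. 0 \<le> p q) \<and> antimono_on {0..} p \<and> 0 < p 0 \<and>
     has_right_deriv p 0 \<and> (\<forall>q>0. has_left_deriv p q \<and> has_right_deriv p q)"

definition min_marg0 :: "nat \<Rightarrow> (nat \<Rightarrow> real \<Rightarrow> real) \<Rightarrow> real" where
  "min_marg0 N C = Min ((\<lambda>n. right_deriv (C n) 0) ` {..<N})"

definition assumption3 :: "nat \<Rightarrow> (real \<Rightarrow> real) \<Rightarrow> (nat \<Rightarrow> real \<Rightarrow> real) \<Rightarrow> bool" where
  "assumption3 N p C \<longleftrightarrow> (\<exists>R>0. p R \<le> min_marg0 N C)"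

definition assumption4 :: "nat \<Rightarrow> (real \<Rightarrow> real) \<Rightarrow> (nat \<Rightarrow> real \<Rightarrow> real) \<Rightarrow> bool" where
  "assumption4 N p C \<longleftrightarrow> p 0 > min_marg0 N C"

end

theory Submission imports Defs begin

(* Proof idea.  Write X for the total supply, c_n = C_n'(0) for the marginal cost at zero and
   c = min_n c_n for the cheapest marginal cost.

   Since p is nonincreasing, its left derivative is nonpositive, so the
   optimality condition of an active supplier gives C_n'(x_n) <= p(X).  Convexity with C_n(0) = 0
   gives C_n(x_n) <= x_n C_n'(x_n) <= x_n p(X), hence total cost <= X p(X) <= integral_0^X p.
   One of the two inequalities is strict: if p(X) < p(0) the integral is strictly larger than
   the rectangle X p(X); if p(X) = p(0) > c, the cheapest supplier must be active and, because
   its average cost tends to c < p(X) at zero, its cost is strictly below x_m p(X).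

   Every cost satisfies C_n(y) >= c y and p <= c beyond R, so W <= R p(0)
   everywhere and the supremum exists; letting only the cheapest supplier produce a small
   amount e yields positive welfare, because its average cost near 0 is below p(e). *)

section \<open>Convex cost functions vanishing at zero\<close>

lemma convex_average_mono:
  fixes C :: "real \<Rightarrow> real"
  assumes cv: "convex_on {0..} C" and C0: "C 0 = 0" and s: "0 < s" "s \<le> t"
  shows "C s / s \<le> C t / t"
proof -
  have t: "0 < t" using s by linarith
  have "C ((1 - s/t) *\<^sub>R 0 + (s/t) *\<^sub>R t) \<le> (1 - s/t) * C 0 + (s/t) * C t"
    by (rule convex_onD[OF cv]) (use s t in auto)
  hence "C s \<le> (s/t) * C t" using t C0 by simp
  thus ?thesis using s t by (simp add: field_simps)
qed

text \<open>Hence the right derivative at 0 exists: it is the infimum of the average costs, i.e.\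
  their limit at \<open>0+\<close> and a lower bound for all of them.  Nonnegativity rules out the
  average cost diverging to \<open>-\<infinity>\<close> (as for \<open>x ln x\<close>).\<close>

lemma convex_right_deriv_zero:
  fixes C :: "real \<Rightarrow> real"
  assumes cv: "convex_on {0..} C" and C0: "C 0 = 0" and nn: "\<forall>x\<ge>0. 0 \<le> C x"
  shows "((\<lambda>y. C y / y) \<longlongrightarrow> right_deriv C 0) (at_right 0)"
    and "\<And>t. 0 < t \<Longrightarrow> right_deriv C 0 \<le> C t / t"
proof -
  define S where "S = (\<lambda>y. C y / y) ` {0<..}"
  define L where "L = Inf S"
  have bdd: "bdd_below S" unfolding S_def bdd_below_def
    by (rule exI[of _ 0]) (auto intro!: divide_nonneg_pos simp: nn)
  have ne: "S \<noteq> {}" unfolding S_def by auto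
  have L_le: "L \<le> C t / t" if "0 < t" for t
    unfolding L_def S_def using bdd that by (intro cInf_lower) (auto simp: S_def)
  have lim: "((\<lambda>y. C y / y) \<longlongrightarrow> L) (at_right 0)"
  proof (rule order_tendstoI)
    fix a assume "a < L"
    show "\<forall>\<^sub>F y in at_right 0. a < C y / y"
      unfolding eventually_at_right_field using L_le \<open>a < L\<close>
      by (intro exI[of _ 1]) (auto intro: less_le_trans)
  next
    fix a assume "L < a"
    then obtain s where "s \<in> S" "s < a" unfolding L_def using ne cInf_less_iff bdd by blast
    then obtain t where t: "0 < t" "C t / t < a" unfolding S_def by auto
    show "\<forall>\<^sub>F y in at_right 0. C y / y < a"
      unfolding eventually_at_right_field
    proof (intro exI[of _ t] conjI allI impI)
      fix y assume "0 < y" "y < t"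
      hence "C y / y \<le> C t / t" using convex_average_mono[OF cv C0, of y t] by auto
      thus "C y / y < a" using t by linarith
    qed (use t in auto)
  qed
  have "right_deriv C 0 = L"
    unfolding right_deriv_def using lim C0 by (simp add: tendsto_Lim)
  thus "((\<lambda>y. C y / y) \<longlongrightarrow> right_deriv C 0) (at_right 0)"
    and "\<And>t. 0 < t \<Longrightarrow> right_deriv C 0 \<le> C t / t"
    using lim L_le by simp_all
qed

lemma convex_above_tangent_at:
  fixes C :: "real \<Rightarrow> real"
  assumes cv: "convex_on {0..} C" and d: "C differentiable (at x)" and x: "0 < x" and y: "0 \<le> y"
  shows "deriv C x * (y - x) \<le> C y - C x"
proof -
  have "(C has_real_derivative deriv C x) (at x)"
    using d DERIV_deriv_iff_real_differentiable by blast
  hence "(C has_real_derivative deriv C x) (at x within {0..})"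
    by (rule has_field_derivative_at_within)
  thus ?thesis by (intro convex_on_imp_above_tangent[OF cv]) (use x y in auto)
qed

text \<open>The tangent at \<open>x\<close> evaluated at 0: the average cost never exceeds the marginal cost.\<close>

lemma convex_cost_le_marginal:
  fixes C :: "real \<Rightarrow> real"
  assumes cv: "convex_on {0..} C" and C0: "C 0 = 0" and d: "C differentiable (at x)" and x: "0 < x"
  shows "C x \<le> x * deriv C x"
  using convex_above_tangent_at[OF cv d x, of 0] C0 by (simp add: algebra_simps)

text \<open>If the marginal cost at \<open>x\<close> is at most \<open>P\<close> and the marginal cost at 0 is strictly
  below \<open>P\<close>, the cost of \<open>x\<close> is strictly below the revenue \<open>x P\<close>: pick a small \<open>y\<close> whose
  average cost is below \<open>P\<close> and follow the tangent at \<open>x\<close> back to \<open>y\<close>.\<close>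

lemma convex_cost_lt_revenue:
  fixes C :: "real \<Rightarrow> real"
  assumes cv: "convex_on {0..} C" and C0: "C 0 = 0" and nn: "\<forall>x\<ge>0. 0 \<le> C x"
    and d: "C differentiable (at x)" and x: "0 < x"
    and marg_le: "deriv C x \<le> P" and cheap: "right_deriv C 0 < P"
  shows "C x < x * P"
proof -
  have "\<forall>\<^sub>F t in at_right 0. C t / t < P"
    using convex_right_deriv_zero(1)[OF cv C0 nn] cheap by (rule order_tendstoD)
  then obtain y where y: "0 < y" "y < x" "C y / y < P"
    using x unfolding eventually_at_right_field
    by (metis dense field_lbound_gt_zero less_imp_le order.strict_trans2)
  have "C x \<le> C y + deriv C x * (x - y)"
    using convex_above_tangent_at[OF cv d x, of y] y by (simp add: algebra_simps)
  also have "\<dots> \<le> C y + P * (x - y)"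
    using marg_le y by (intro add_left_mono mult_right_mono) auto
  also have "\<dots> < x * P"
    using y by (simp add: field_simps)
  finally show ?thesis .
qed

text \<open>Since the average cost dominates its infimum, a cost grows at least linearly with any
  slope not exceeding the marginal cost at zero.\<close>

lemma convex_cost_ge_linear:
  fixes C :: "real \<Rightarrow> real"
  assumes cv: "convex_on {0..} C" and C0: "C 0 = 0" and nn: "\<forall>x\<ge>0. 0 \<le> C x"
    and c: "c \<le> right_deriv C 0" and y: "0 \<le> y"
  shows "c * y \<le> C y"
proof (cases "y = 0")
  case True thus ?thesis using C0 by simp
next
  case False
  hence "0 < y" using y by simp
  moreover have "c \<le> C y / y"
    using convex_right_deriv_zero(2)[OF cv C0 nn \<open>0 < y\<close>] c by linarith
  ultimately show ?thesis by (simp add: field_simps)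
qed

section \<open>Nonincreasing price functions\<close>

lemma antimono_left_deriv_nonpos:
  fixes p :: "real \<Rightarrow> real"
  assumes am: "antimono_on {0..} p" and X: "0 < X" and h: "has_left_deriv p X"
  shows "left_deriv p X \<le> 0"
proof -
  obtain L where L: "((\<lambda>y. (p y - p X) / (y - X)) \<longlongrightarrow> L) (at_left X)"
    using h unfolding has_left_deriv_def by blast
  have "\<forall>\<^sub>F y in at_left X. (p y - p X) / (y - X) \<le> 0"
    unfolding eventually_at_left_field
  proof (intro exI[of _ 0] conjI allI impI)
    fix y assume "0 < y" "y < X"
    hence "p X \<le> p y" using am by (auto simp: monotone_on_def)
    thus "(p y - p X) / (y - X) \<le> 0" using \<open>y < X\<close> by (intro divide_nonneg_neg) auto
  qed (use X in auto)
  hence "L \<le> 0" by (intro tendsto_upperbound[OF L]) simp_all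
  moreover have "left_deriv p X = L" unfolding left_deriv_def using L by (simp add: tendsto_Lim)
  ultimately show ?thesis by simp
qed

lemma continuous_on_at_right_zero:
  fixes p :: "real \<Rightarrow> real"
  assumes "continuous_on {0..} p"
  shows "(p \<longlongrightarrow> p 0) (at_right 0)"
proof -
  have "(p \<longlongrightarrow> p 0) (at 0 within {0..})" using assms unfolding continuous_on_def by auto
  thus ?thesis by (rule tendsto_within_subset) auto
qed

lemma antimono_integral_bounds:
  fixes p :: "real \<Rightarrow> real"
  assumes cp: "continuous_on {0..} p" and am: "antimono_on {0..} p" and ab: "0 \<le> a" "a \<le> b"
  shows "p integrable_on {a..b}"
    and "(b - a) * p b \<le> integral {a..b} p"
    and "integral {a..b} p \<le> (b - a) * p a"
proof -
  show int: "p integrable_on {a..b}"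
    using continuous_on_subset[OF cp, of "{a..b}"] ab
    by (intro integrable_continuous_interval) auto
  have "integral {a..b} (\<lambda>_. p b) \<le> integral {a..b} p"
    by (rule integral_le[OF _ int]) (use am ab in \<open>auto simp: monotone_on_def\<close>)
  thus "(b - a) * p b \<le> integral {a..b} p" using ab by simp
  have "integral {a..b} p \<le> integral {a..b} (\<lambda>_. p a)"
    by (rule integral_le[OF int]) (use am ab in \<open>auto simp: monotone_on_def\<close>)
  thus "integral {a..b} p \<le> (b - a) * p a" using ab by simp
qed

lemma antimono_integral_split:
  fixes p :: "real \<Rightarrow> real"
  assumes cp: "continuous_on {0..} p" and am: "antimono_on {0..} p" and "0 \<le> d" "d \<le> X"
  shows "integral {0..X} p = integral {0..d} p + integral {d..X} p"
  using Henstock_Kurzweil_Integration.integral_combine[of 0 d X p]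
    antimono_integral_bounds(1)[OF cp am, of 0 X] assms by simp

text \<open>If the price really drops on \<open>[0, X]\<close>, the consumer value strictly exceeds the
  revenue \<open>X p(X)\<close>: by continuity \<open>p\<close> stays above \<open>p(X)\<close> on some \<open>[0, d]\<close>.\<close>

lemma antimono_integral_gt_rectangle:
  fixes p :: "real \<Rightarrow> real"
  assumes cp: "continuous_on {0..} p" and am: "antimono_on {0..} p"
    and X: "0 \<le> X" and drop: "p X < p 0"
  shows "X * p X < integral {0..X} p"
proof -
  have "0 < X" using X drop by (cases "X = 0") auto
  have "\<forall>\<^sub>F t in at_right 0. (p 0 + p X) / 2 < p t"
    using continuous_on_at_right_zero[OF cp] drop by (intro order_tendstoD) auto
  then obtain d where d: "0 < d" "d < X" "(p 0 + p X) / 2 < p d"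
    using \<open>0 < X\<close> unfolding eventually_at_right_field
    by (metis dense field_lbound_gt_zero less_imp_le order.strict_trans2)
  have "d * p d + (X - d) * p X \<le> integral {0..X} p"
    using antimono_integral_split[OF cp am, of d X]
      antimono_integral_bounds(2)[OF cp am, of 0 d] antimono_integral_bounds(2)[OF cp am, of d X] d
    by simp
  moreover have "d * p X < d * p d" using d drop by (intro mult_strict_left_mono) auto
  ultimately show ?thesis by (simp add: algebra_simps)
qed

lemma antimono_integral_le_threshold:
  fixes p :: "real \<Rightarrow> real"
  assumes cp: "continuous_on {0..} p" and am: "antimono_on {0..} p" and p0: "0 \<le> p 0"
    and R: "0 < R" "p R \<le> c" and c: "0 \<le> c" and X: "0 \<le> X"
  shows "integral {0..X} p \<le> R * p 0 + c * X"
proof (cases "X \<le> R")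
  case True
  have "integral {0..X} p \<le> X * p 0" using antimono_integral_bounds(3)[OF cp am, of 0 X] X by simp
  also have "\<dots> \<le> R * p 0" using True p0 by (intro mult_right_mono) auto
  finally show ?thesis using c X by (simp add: add_increasing2)
next
  case False
  have "integral {0..X} p \<le> R * p 0 + (X - R) * p R"
    using antimono_integral_split[OF cp am, of R X]
      antimono_integral_bounds(3)[OF cp am, of 0 R] antimono_integral_bounds(3)[OF cp am, of R X] R False
    by simp
  also have "(X - R) * p R \<le> (X - R) * c" using R False by (intro mult_left_mono) auto
  also have "\<dots> \<le> c * X" using R c by (simp add: algebra_simps)
  finally show ?thesis by simp
qed

section \<open>Supply vectors, marginal costs and Cournot candidates\<close>

lemma total_nonneg: "(\<And>n. n < N \<Longrightarrow> 0 \<le> x n) \<Longrightarrow> 0 \<le> total N x"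
  unfolding total_def by (intro sum_nonneg) auto

lemma le_total: "(\<And>n. n < N \<Longrightarrow> 0 \<le> x n) \<Longrightarrow> n < N \<Longrightarrow> x n \<le> total N x"
  unfolding total_def by (intro member_le_sum) auto

lemma min_marg0_le: "n < N \<Longrightarrow> min_marg0 N C \<le> right_deriv (C n) 0"
  unfolding min_marg0_def by (intro Min_le) auto

lemma cheap_supplier_exists:
  assumes N: "0 < N" and A4: "assumption4 N p C"
  shows "\<exists>m<N. right_deriv (C m) 0 < p 0"
proof -
  have "min_marg0 N C \<in> (\<lambda>n. right_deriv (C n) 0) ` {..<N}"
    unfolding min_marg0_def using N by (intro Min_in) auto
  then obtain m where m: "m \<in> {..<N}" "min_marg0 N C = right_deriv (C m) 0"
    by (rule imageE)
  have "right_deriv (C m) 0 < p 0" using A4 m(2) unfolding assumption4_def by simp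
  thus ?thesis using m(1) by blast
qed

text \<open>An active supplier at a candidate has marginal cost at most the price, because the
  correction term \<open>x_n \<partial>\<^sub>-p(X)\<close> is nonpositive.\<close>

lemma candidate_marginal_le_price:
  assumes A2: "assumption2 p" and cand: "cournot_candidate N p C x"
    and n: "n < N" "0 < x n"
  shows "deriv (C n) (x n) \<le> p (total N x)"
proof -
  define X where "X = total N x"
  have "0 < X"
    using le_total[of N x n] cand n unfolding X_def cournot_candidate_def by force
  hence "left_deriv p X \<le> 0"
    using A2 antimono_left_deriv_nonpos unfolding assumption2_def by blast
  hence "x n * left_deriv p X \<le> 0" using n by (simp add: mult_nonneg_nonpos)
  thus ?thesis using cand n unfolding cournot_candidate_def marg_def X_def by force
qed

lemma candidate_cost_le_revenue:
  assumes A1: "assumption1 N C" and A2: "assumption2 p" and cand: "cournot_candidate N p C x"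
    and n: "n < N"
  shows "C n (x n) \<le> x n * p (total N x)"
proof (cases "x n = 0")
  case True thus ?thesis using A1 n unfolding assumption1_def by simp
next
  case False
  hence xn: "0 < x n" using cand n unfolding cournot_candidate_def by force
  have "C n (x n) \<le> x n * deriv (C n) (x n)"
    using A1 n xn convex_cost_le_marginal unfolding assumption1_def by blast
  also have "\<dots> \<le> x n * p (total N x)"
    using candidate_marginal_le_price[OF A2 cand n xn] xn by (intro mult_left_mono) auto
  finally show ?thesis .
qed

text \<open>A supplier whose marginal cost at zero is below the market price cannot be idle at a
  candidate: the optimality condition at \<open>x_m = 0\<close> reads \<open>C_m'(0) \<ge> p(X)\<close>.\<close>

lemma candidate_cheap_supplier_active:
  assumes cand: "cournot_candidate N p C x" and m: "m < N"
    and cheap: "right_deriv (C m) 0 < p (total N x)"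
  shows "0 < x m"
proof (rule ccontr)
  assume "\<not> 0 < x m"
  hence "x m = 0" using cand m unfolding cournot_candidate_def by force
  thus False using cand m cheap unfolding cournot_candidate_def marg_def by force
qed

section \<open>Welfare at Cournot candidates\<close>

lemma candidate_welfare_pos:
  assumes N: "0 < N" and A1: "assumption1 N C" and A2: "assumption2 p"
    and A4: "assumption4 N p C" and cand: "cournot_candidate N p C x"
  shows "0 < welfare N p C x"
proof -
  define X where "X = total N x"
  have cp: "continuous_on {0..} p" and am: "antimono_on {0..} p"
    using A2 unfolding assumption2_def by auto
  obtain m where m: "m < N" "right_deriv (C m) 0 < p 0"
    using cheap_supplier_exists[OF N A4] by blast
  have xnn: "\<And>n. n < N \<Longrightarrow> 0 \<le> x n" using cand unfolding cournot_candidate_def by blast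
  have X0: "0 \<le> X" unfolding X_def using total_nonneg[OF xnn] .
  have cost_le: "\<And>n. n < N \<Longrightarrow> C n (x n) \<le> x n * p X"
    unfolding X_def using candidate_cost_le_revenue[OF A1 A2 cand] .
  have revenue: "(\<Sum>n<N. x n * p X) = X * p X"
    unfolding X_def total_def by (simp add: sum_distrib_right)
  have "(\<Sum>n<N. C n (x n)) < integral {0..X} p"
  proof (cases "p X < p 0")
    case True
    have "(\<Sum>n<N. C n (x n)) \<le> (\<Sum>n<N. x n * p X)" using cost_le by (intro sum_mono) auto
    also have "\<dots> = X * p X" using revenue .
    also have "\<dots> < integral {0..X} p" using antimono_integral_gt_rectangle[OF cp am X0 True] .
    finally show ?thesis .
  next
    case False
    moreover have "p X \<le> p 0" using am X0 by (auto simp: monotone_on_def)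
    ultimately have pX: "p X = p 0" by linarith
    have xm: "0 < x m"
      using candidate_cheap_supplier_active[OF cand m(1)] m pX unfolding X_def by simp
    have Cm: "convex_on {0..} (C m)" "C m 0 = 0" "\<forall>x\<ge>0. 0 \<le> C m x"
        "C m differentiable (at (x m))"
      using A1 m(1) xm unfolding assumption1_def by auto
    have "C m (x m) < x m * p X"
      using convex_cost_lt_revenue[OF Cm xm] candidate_marginal_le_price[OF A2 cand m(1) xm] m(2) pX
      unfolding X_def by simp
    hence "(\<Sum>n<N. C n (x n)) < (\<Sum>n<N. x n * p X)"
      using cost_le m(1) by (intro sum_strict_mono_ex1) auto
    also have "\<dots> = X * p X" using revenue .
    also have "\<dots> \<le> integral {0..X} p" using antimono_integral_bounds(2)[OF cp am, of 0 X] X0 by simp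
    finally show ?thesis .
  qed
  thus ?thesis unfolding welfare_def X_def by simp
qed

section \<open>Optimal welfare\<close>

text \<open>Welfare is bounded above by \<open>R p(0)\<close>: costs grow at least with slope \<open>c = min C_n'(0)\<close>
  while the price is at most \<open>c\<close> beyond \<open>R\<close>.\<close>

lemma welfare_le_bound:
  assumes A1: "assumption1 N C" and A2: "assumption2 p"
    and R: "0 < R" "p R \<le> min_marg0 N C" and y: "\<forall>n<N. 0 \<le> y n"
  shows "welfare N p C y \<le> R * p 0"
proof -
  define c where "c = min_marg0 N C"
  define X where "X = total N y"
  have cp: "continuous_on {0..} p" and am: "antimono_on {0..} p" and pnn: "\<forall>q\<ge>0. 0 \<le> p q"
    using A2 unfolding assumption2_def by auto
  have c0: "0 \<le> c" using R pnn[rule_format, of R] unfolding c_def by linarith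
  have "c * y n \<le> C n (y n)" if n: "n < N" for n
    using A1 n y min_marg0_le[OF n, of C] convex_cost_ge_linear
    unfolding assumption1_def c_def by blast
  hence "c * X \<le> (\<Sum>n<N. C n (y n))"
    unfolding X_def total_def sum_distrib_left by (intro sum_mono) auto
  moreover have "integral {0..X} p \<le> R * p 0 + c * X"
    using antimono_integral_le_threshold[OF cp am _ R(1) _ c0] R pnn total_nonneg y
    unfolding c_def X_def by force
  ultimately show ?thesis unfolding welfare_def X_def by simp
qed

text \<open>Letting only a supplier with \<open>C_m'(0) < p(0)\<close> produce a small amount \<open>e\<close> yields positive
  welfare: near 0 its average cost is below the midpoint of \<open>C_m'(0)\<close> and \<open>p(0)\<close>,
  which in turn is below \<open>p(e)\<close>.\<close>

lemma welfare_single_supplier_pos: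
  assumes A1: "assumption1 N C" and A2: "assumption2 p"
    and m: "m < N" "right_deriv (C m) 0 < p 0"
  shows "\<exists>y. (\<forall>n<N. 0 \<le> y n) \<and> 0 < welfare N p C y"
proof -
  define P where "P = (right_deriv (C m) 0 + p 0) / 2"
  have cp: "continuous_on {0..} p" and am: "antimono_on {0..} p"
    using A2 unfolding assumption2_def by auto
  have Cm: "convex_on {0..} (C m)" "C m 0 = 0" "\<forall>x\<ge>0. 0 \<le> C m x"
    using A1 m(1) unfolding assumption1_def by auto
  have "\<forall>\<^sub>F t in at_right 0. C m t / t < P \<and> P < p t"
    using convex_right_deriv_zero(1)[OF Cm] continuous_on_at_right_zero[OF cp] m(2)
    unfolding P_def by (intro eventually_conj order_tendstoD) auto
  then obtain e where e: "0 < e" "C m e / e < P" "P < p e"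
    unfolding eventually_at_right_field by (metis field_lbound_gt_zero zero_less_one)
  define y where "y = (\<lambda>n. if n = m then e else 0::real)"
  have total: "total N y = e" unfolding total_def y_def using m(1) by simp
  have "(\<Sum>n<N. C n (y n)) = (\<Sum>n<N. if n = m then C m e else 0)"
    using A1 by (intro sum.cong) (auto simp: y_def assumption1_def)
  hence cost: "(\<Sum>n<N. C n (y n)) = C m e" using m(1) by simp
  have "C m e < e * P" using e by (simp add: field_simps)
  also have "\<dots> \<le> e * p e" using e by (intro mult_left_mono) auto
  also have "\<dots> \<le> integral {0..e} p" using antimono_integral_bounds(2)[OF cp am, of 0 e] e by simp
  finally have "0 < welfare N p C y" unfolding welfare_def total cost by simp
  moreover have "\<forall>n<N. 0 \<le> y n" using e by (simp add: y_def)
  ultimately show ?thesis by blast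
qed

theorem proposition5:
  fixes N :: nat and p :: "real \<Rightarrow> real" and C :: "nat \<Rightarrow> real \<Rightarrow> real"
  assumes "0 < N"
    and "assumption1 N C" and "assumption2 p"
    and "assumption3 N p C" and "assumption4 N p C"
  shows "(\<forall>x. cournot_candidate N p C x \<longrightarrow> 0 < welfare N p C x) \<and>
         0 < Sup ((welfare N p C ` {y. \<forall>n<N. 0 \<le> y n}))"
proof
  show "\<forall>x. cournot_candidate N p C x \<longrightarrow> 0 < welfare N p C x"
    using candidate_welfare_pos[OF assms(1,2,3,5)] by blast
  define Y where "Y = {y::nat\<Rightarrow>real. \<forall>n<N. 0 \<le> y n}"
  obtain R where R: "0 < R" "p R \<le> min_marg0 N C"
    using assms(4) unfolding assumption3_def by blast
  have bounded: "bdd_above (welfare N p C ` Y)"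
    using welfare_le_bound[OF assms(2,3) R] unfolding Y_def by (intro bdd_aboveI2) auto
  obtain m where "m < N" "right_deriv (C m) 0 < p 0"
    using cheap_supplier_exists[OF assms(1,5)] by blast
  then obtain y where "y \<in> Y" "0 < welfare N p C y"
    using welfare_single_supplier_pos[OF assms(2,3)] unfolding Y_def by blast
  hence "0 < Sup (welfare N p C ` Y)"
    using bounded by (meson cSup_upper image_eqI less_le_trans)
  thus "0 < Sup (welfare N p C ` {y. \<forall>n<N. 0 \<le> y n})" unfolding Y_def .
qed

end
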